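(* Let $C$ be a small category, $T$ an object of $C$, and let $\xi_*,\xi'_*:(X,f)\to(Y,g)$ be morphisms of the left fiber $(\Delta/C)/T$ such that $\xi_*\sim\xi'_*$ as morphisms of $\Delta/C$. Then $r(\xi_* )\sim r(\xi'_* )$.
   Context: For $q\ge0$, $[q]=\{0<\dots<q\}$. A $q$-simplex of the nerve $NC$ is a functor $X:[q]\to C$, i.e. a chain $X_0\to\dots\to X_q$; $q_X=q$; $X(i\to j)$ is the composite $X_i\to X_j$. $\Delta/C$ has all simplices as objects and as morphisms $X\to Y$ the order-preserving $\xi:[q_X]\to[q_Y]$ with $Y\circ\xi=X$, written $\xi_*$. For a $q$-simplex $X$ and surjective order-preserving $s:[q+1]\to[q]$ with order-preserving right inverses $d,d'$, $d_*,d'_*:X\to X\circ s$ are elementary equivalent; $\sim$ is the smallest equivalence relation on morphisms of $\Delta/C$ (with same source and target) compatible with composition containing all elementary equivalent pairs. $\sup:\Delta/C\to C$ sends $X$ to $X_{q_X}$ and $\xi_*:X\to Y$ to $Y(\xi(q_X)\to q_Y)$. The left fiber $(\Delta/C)/T$ has objects pairs $(X,f)$ with $f:X_{q_X}\to T$, and morphisms $(X,f)\to(Y,g)$ the morphisms $\xi_*:X\to Y$ of $\Delta/C$ with $g\circ\sup(\xi_* )=f$. For an object $(X,f)$, $r(X,f)$ is the $(q_X+1)$-simplex $X_0\to\dots\to X_{q_X}\xrightarrow{f}T$. For a morphism $\xi_*:(X,f)\to(Y,g)$, $r(\xi_* ):r(X,f)\to r(Y,g)$ is the morphism of $\Delta/C$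 given by the order-preserving map $[q_X+1]\to[q_Y+1]$ sending $j\mapsto\xi(j)$ for $0\le j\le q_X$ and $q_X+1\mapsto q_Y+1$. *)

theory Defs
  imports Main
begin

record ('o, 'm) category =
  Obj :: "'o set"
  Mor :: "'m set"
  Dom :: "'m \<Rightarrow> 'o"
  Cod :: "'m \<Rightarrow> 'o"
  Cmp :: "'m \<Rightarrow> 'm \<Rightarrow> 'm"
  Idt :: "'o \<Rightarrow> 'm"

definition is_category :: "('o, 'm) category \<Rightarrow> bool" where
  "is_category C \<longleftrightarrow>
     (\<forall>f \<in> Mor C. Dom C f \<in> Obj C \<and> Cod C f \<in> Obj C) \<and>
     (\<forall>a \<in> Obj C. Idt C a \<in> Mor C \<and> Dom C (Idt C a) = a \<and> Cod C (Idt C a) = a) \<and>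
     (\<forall>f \<in> Mor C. \<forall>g \<in> Mor C. Cod C f = Dom C g \<longrightarrow>
        Cmp C g f \<in> Mor C \<and> Dom C (Cmp C g f) = Dom C f \<and> Cod C (Cmp C g f) = Cod C g) \<and>
     (\<forall>f \<in> Mor C. Cmp C f (Idt C (Dom C f)) = f \<and> Cmp C (Idt C (Cod C f)) f = f) \<and>
     (\<forall>f \<in> Mor C. \<forall>g \<in> Mor C. \<forall>h \<in> Mor C. Cod C f = Dom C g \<longrightarrow> Cod C g = Dom C h \<longrightarrow>
        Cmp C h (Cmp C g f) = Cmp C (Cmp C h g) f)"

text \<open>A q-simplex X : [q] \<rightarrow> C is represented by (q, ob, ar) where ob i = X_i and
  ar i j = X(i \<rightarrow> j) for i \<le> j \<le> q; outside these ranges the values are undefined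
  (extensional representation, so that equality of simplices is equality of functors).\<close>

type_synonym ('o, 'm) simplex = "nat \<times> (nat \<Rightarrow> 'o) \<times> (nat \<Rightarrow> nat \<Rightarrow> 'm)"

definition qdim :: "('o, 'm) simplex \<Rightarrow> nat" where "qdim X = fst X"
definition sob :: "('o, 'm) simplex \<Rightarrow> nat \<Rightarrow> 'o" where "sob X = fst (snd X)"
definition sar :: "('o, 'm) simplex \<Rightarrow> nat \<Rightarrow> nat \<Rightarrow> 'm" where "sar X = snd (snd X)"

definition is_simplex :: "('o, 'm) category \<Rightarrow> ('o, 'm) simplex \<Rightarrow> bool" where
  "is_simplex C X \<longleftrightarrow>
     (\<forall>i \<le> qdim X. sob X i \<in> Obj C) \<and>
     (\<forall>i j. i \<le> j \<and> j \<le> qdim X \<longrightarrow>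
        sar X i j \<in> Mor C \<and> Dom C (sar X i j) = sob X i \<and> Cod C (sar X i j) = sob X j) \<and>
     (\<forall>i \<le> qdim X. sar X i i = Idt C (sob X i)) \<and>
     (\<forall>i j k. i \<le> j \<and> j \<le> k \<and> k \<le> qdim X \<longrightarrow> Cmp C (sar X j k) (sar X i j) = sar X i k) \<and>
     (\<forall>i. qdim X < i \<longrightarrow> sob X i = undefined) \<and>
     (\<forall>i j. \<not> (i \<le> j \<and> j \<le> qdim X) \<longrightarrow> sar X i j = undefined)"

definition precomp :: "('o, 'm) simplex \<Rightarrow> (nat \<Rightarrow> nat) \<Rightarrow> nat \<Rightarrow> ('o, 'm) simplex" where
  "precomp Y \<xi> q =
     (q, (\<lambda>i. if i \<le> q then sob Y (\<xi> i) else undefined),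
         (\<lambda>i j. if i \<le> j \<and> j \<le> q then sar Y (\<xi> i) (\<xi> j) else undefined))"

text \<open>A morphism \<xi>_* : X \<rightarrow> Y of \<Delta>/C is represented by the triple (X, \<xi>, Y), with \<xi>
  extensional (undefined outside [q_X]).\<close>

type_synonym ('o, 'm) dmor = "('o, 'm) simplex \<times> (nat \<Rightarrow> nat) \<times> ('o, 'm) simplex"

definition is_dmor :: "('o, 'm) category \<Rightarrow> ('o, 'm) dmor \<Rightarrow> bool" where
  "is_dmor C m \<longleftrightarrow> (case m of (X, \<xi>, Y) \<Rightarrow>
     is_simplex C X \<and> is_simplex C Y \<and>
     (\<forall>i \<le> qdim X. \<xi> i \<le> qdim Y) \<and>
     (\<forall>i j. i \<le> j \<and> j \<le> qdim X \<longrightarrow> \<xi> i \<le> \<xi> j) \<and>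
     (\<forall>i. qdim X < i \<longrightarrow> \<xi> i = undefined) \<and>
     precomp Y \<xi> (qdim X) = X)"

definition dcomp :: "('o, 'm) dmor \<Rightarrow> ('o, 'm) dmor \<Rightarrow> ('o, 'm) dmor" where
  "dcomp n m = (case m of (X, \<xi>, Y) \<Rightarrow> case n of (Y', \<eta>, Z) \<Rightarrow>
     (X, (\<lambda>i. if i \<le> qdim X then \<eta> (\<xi> i) else undefined), Z))"

text \<open>Elementary equivalence: X a q-simplex, s : [q+1] \<rightarrow> [q] surjective order preserving,
  d, d' order-preserving right inverses of s; then d_*, d'_* : X \<rightarrow> X o s.\<close>

definition elem_equiv :: "('o, 'm) category \<Rightarrow> ('o, 'm) dmor \<Rightarrow> ('o, 'm) dmor \<Rightarrow> bool" where
  "elem_equiv C m m' \<longleftrightarrow>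
     (\<exists>X s d d'. is_simplex C X \<and>
        (\<forall>i \<le> Suc (qdim X). s i \<le> qdim X) \<and>
        (\<forall>i j. i \<le> j \<and> j \<le> Suc (qdim X) \<longrightarrow> s i \<le> s j) \<and>
        (\<forall>k \<le> qdim X. \<exists>i \<le> Suc (qdim X). s i = k) \<and>
        (\<forall>i \<le> qdim X. d i \<le> Suc (qdim X) \<and> d' i \<le> Suc (qdim X)) \<and>
        (\<forall>i j. i \<le> j \<and> j \<le> qdim X \<longrightarrow> d i \<le> d j \<and> d' i \<le> d' j) \<and>
        (\<forall>i \<le> qdim X. s (d i) = i \<and> s (d' i) = i) \<and>
        m = (X, (\<lambda>i. if i \<le> qdim X then d i else undefined), precomp X s (Suc (qdim X))) \<and>
        m' = (X, (\<lambda>i. if i \<le> qdim X then d' i else undefined), precomp X s (Suc (qdim X))))"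

inductive dequiv :: "('o, 'm) category \<Rightarrow> ('o, 'm) dmor \<Rightarrow> ('o, 'm) dmor \<Rightarrow> bool"
  for C :: "('o, 'm) category" where
  elem: "elem_equiv C m m' \<Longrightarrow> dequiv C m m'"
| refl: "is_dmor C m \<Longrightarrow> dequiv C m m"
| sym: "dequiv C m m' \<Longrightarrow> dequiv C m' m"
| trans: "dequiv C m m' \<Longrightarrow> dequiv C m' m'' \<Longrightarrow> dequiv C m m''"
| comp_left: "dequiv C m m' \<Longrightarrow> is_dmor C n \<Longrightarrow> fst n = snd (snd m) \<Longrightarrow>
     dequiv C (dcomp n m) (dcomp n m')"
| comp_right: "dequiv C m m' \<Longrightarrow> is_dmor C k \<Longrightarrow> snd (snd k) = fst m \<Longrightarrow>
     dequiv C (dcomp m k) (dcomp m' k)"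

definition sup_ob :: "('o, 'm) simplex \<Rightarrow> 'o" where
  "sup_ob X = sob X (qdim X)"

definition sup_mor :: "('o, 'm) dmor \<Rightarrow> 'm" where
  "sup_mor m = (case m of (X, \<xi>, Y) \<Rightarrow> sar Y (\<xi> (qdim X)) (qdim Y))"

definition fiber_obj :: "('o, 'm) category \<Rightarrow> 'o \<Rightarrow> ('o, 'm) simplex \<Rightarrow> 'm \<Rightarrow> bool" where
  "fiber_obj C T X f \<longleftrightarrow> is_simplex C X \<and> f \<in> Mor C \<and> Dom C f = sup_ob X \<and> Cod C f = T"

definition fiber_mor :: "('o, 'm) category \<Rightarrow> 'o \<Rightarrow> ('o, 'm) simplex \<Rightarrow> 'm \<Rightarrow>
    (nat \<Rightarrow> nat) \<Rightarrow> ('o, 'm) simplex \<Rightarrow> 'm \<Rightarrow> bool" where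
  "fiber_mor C T X f \<xi> Y g \<longleftrightarrow> fiber_obj C T X f \<and> fiber_obj C T Y g \<and>
     is_dmor C (X, \<xi>, Y) \<and> Cmp C g (sup_mor (X, \<xi>, Y)) = f"

definition r_obj :: "('o, 'm) category \<Rightarrow> 'o \<Rightarrow> ('o, 'm) simplex \<Rightarrow> 'm \<Rightarrow> ('o, 'm) simplex" where
  "r_obj C T X f =
     (Suc (qdim X),
      (\<lambda>i. if i \<le> qdim X then sob X i else if i = Suc (qdim X) then T else undefined),
      (\<lambda>i j. if i \<le> j \<and> j \<le> qdim X then sar X i j
             else if i \<le> qdim X \<and> j = Suc (qdim X) then Cmp C f (sar X i (qdim X))
             else if i = Suc (qdim X) \<and> j = Suc (qdim X) then Idt C T
             else undefined))"

definition r_map :: "nat \<Rightarrow> nat \<Rightarrow> (nat \<Rightarrow> nat) \<Rightarrow> nat \<Rightarrow> nat" where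
  "r_map qX qY \<xi> = (\<lambda>j. if j \<le> qX then \<xi> j else if j = Suc qX then Suc qY else undefined)"

definition r_mor :: "('o, 'm) category \<Rightarrow> 'o \<Rightarrow> ('o, 'm) simplex \<Rightarrow> 'm \<Rightarrow>
    (nat \<Rightarrow> nat) \<Rightarrow> ('o, 'm) simplex \<Rightarrow> 'm \<Rightarrow> ('o, 'm) dmor" where
  "r_mor C T X f \<xi> Y g = (r_obj C T X f, r_map (qdim X) (qdim Y) \<xi>, r_obj C T Y g)"

end

theory Submission imports Defs begin

text \<open>Extend r from the fiber to every morphism xi: X \<rightarrow> Y of \<Delta>/C, parametrised by a
  morphism g: sup Y \<rightarrow> T, by R g xi = r(xi): r(X, g \<circ> sup xi) \<rightarrow> r(Y, g).
  Then R g (eta \<circ> xi) = R g eta \<circ> R (g \<circ> sup eta) xi, and R g sends an elementary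
  equivalent pair d, d' (sections of s) to the elementary equivalent pair obtained by
  extending s, d and d' by top \<mapsto> top. Since \<sim> preserves sup, an induction on \<sim> shows
  that R g respects \<sim>; and R g is r on the morphisms of the fiber.\<close>

lemma is_simplexD:
  assumes "is_simplex C X"
  shows "\<And>i. i \<le> qdim X \<Longrightarrow> sob X i \<in> Obj C"
    "\<And>i j. i \<le> j \<Longrightarrow> j \<le> qdim X \<Longrightarrow> sar X i j \<in> Mor C"
    "\<And>i j. i \<le> j \<Longrightarrow> j \<le> qdim X \<Longrightarrow> Dom C (sar X i j) = sob X i"
    "\<And>i j. i \<le> j \<Longrightarrow> j \<le> qdim X \<Longrightarrow> Cod C (sar X i j) = sob X j"
    "\<And>i. i \<le> qdim X \<Longrightarrow> sar X i i = Idt C (sob X i)"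
    "\<And>i j k. i \<le> j \<Longrightarrow> j \<le> k \<Longrightarrow> k \<le> qdim X \<Longrightarrow> Cmp C (sar X j k) (sar X i j) = sar X i k"
    "\<And>i. qdim X < i \<Longrightarrow> sob X i = undefined"
    "\<And>i j. \<not> (i \<le> j \<and> j \<le> qdim X) \<Longrightarrow> sar X i j = undefined"
  using assms unfolding is_simplex_def by simp_all

lemma is_dmorD:
  assumes "is_dmor C (X, \<xi>, Y)"
  shows "is_simplex C X" "is_simplex C Y" "\<And>i. i \<le> qdim X \<Longrightarrow> \<xi> i \<le> qdim Y"
    "\<And>i j. i \<le> j \<Longrightarrow> j \<le> qdim X \<Longrightarrow> \<xi> i \<le> \<xi> j"
    "\<And>i. qdim X < i \<Longrightarrow> \<xi> i = undefined"
    "precomp Y \<xi> (qdim X) = X"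
  using assms by (auto simp: is_dmor_def)

lemma qdim_precomp [simp]: "qdim (precomp Y \<xi> q) = q"
  by (simp add: precomp_def qdim_def)

lemma sob_precomp: "i \<le> q \<Longrightarrow> sob (precomp Y \<xi> q) i = sob Y (\<xi> i)"
  by (simp add: precomp_def sob_def)

lemma sar_precomp: "i \<le> j \<Longrightarrow> j \<le> q \<Longrightarrow> sar (precomp Y \<xi> q) i j = sar Y (\<xi> i) (\<xi> j)"
  by (simp add: precomp_def sar_def)

lemma is_simplex_precomp:
  assumes "is_simplex C Y" "\<forall>i \<le> q. \<xi> i \<le> qdim Y" "\<forall>i j. i \<le> j \<and> j \<le> q \<longrightarrow> \<xi> i \<le> \<xi> j"
  shows "is_simplex C (precomp Y \<xi> q)"
  using assms unfolding is_simplex_def precomp_def qdim_def sob_def sar_def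
  by (auto; meson le_trans)

lemma is_dmor_dcomp:
  assumes "is_dmor C (X, \<xi>, Y)" "is_dmor C (Y, \<eta>, Z)"
  shows "is_dmor C (dcomp (Y, \<eta>, Z) (X, \<xi>, Y))"
proof -
  note a = is_dmorD[OF assms(1)] and b = is_dmorD[OF assms(2)]
  have "precomp Z (\<lambda>i. if i \<le> qdim X then \<eta> (\<xi> i) else undefined) (qdim X) = precomp Y \<xi> (qdim X)"
    unfolding precomp_def
    using sob_precomp[where Y = Z, of _ "qdim Y" \<eta>] sar_precomp[where Y = Z, of _ _ "qdim Y" \<eta>] b(6) a(3,4)
    by (auto intro!: ext)
  with a b show ?thesis unfolding is_dmor_def dcomp_def by (auto; meson le_trans)
qed

lemma sup_mor_in_Mor:
  assumes "is_dmor C (X, \<xi>, Y)"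
  shows "sup_mor (X, \<xi>, Y) \<in> Mor C" "Dom C (sup_mor (X, \<xi>, Y)) = sup_ob X"
    "Cod C (sup_mor (X, \<xi>, Y)) = sup_ob Y"
proof -
  note a = is_dmorD[OF assms]
  have top: "\<xi> (qdim X) \<le> qdim Y" using a(3) by simp
  show "sup_mor (X, \<xi>, Y) \<in> Mor C" "Cod C (sup_mor (X, \<xi>, Y)) = sup_ob Y"
    using is_simplexD(2,4)[OF a(2) top] by (auto simp: sup_mor_def sup_ob_def)
  show "Dom C (sup_mor (X, \<xi>, Y)) = sup_ob X"
    using is_simplexD(3)[OF a(2) top] sob_precomp[of "qdim X" "qdim X" Y \<xi>] a(6)
    by (auto simp: sup_mor_def sup_ob_def)
qed

definition codegeneracy :: "nat \<Rightarrow> (nat \<Rightarrow> nat) \<Rightarrow> bool" where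
  "codegeneracy q s \<longleftrightarrow> (\<forall>i \<le> Suc q. s i \<le> q) \<and> (\<forall>i j. i \<le> j \<and> j \<le> Suc q \<longrightarrow> s i \<le> s j) \<and>
     (\<forall>k \<le> q. \<exists>i \<le> Suc q. s i = k)"

definition section_of :: "nat \<Rightarrow> (nat \<Rightarrow> nat) \<Rightarrow> (nat \<Rightarrow> nat) \<Rightarrow> bool" where
  "section_of q s d \<longleftrightarrow> (\<forall>i \<le> q. d i \<le> Suc q) \<and> (\<forall>i j. i \<le> j \<and> j \<le> q \<longrightarrow> d i \<le> d j) \<and>
     (\<forall>i \<le> q. s (d i) = i)"

definition section_dmor :: "('o, 'm) simplex \<Rightarrow> (nat \<Rightarrow> nat) \<Rightarrow> (nat \<Rightarrow> nat) \<Rightarrow> ('o, 'm) dmor" where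
  "section_dmor X s d = (X, (\<lambda>i. if i \<le> qdim X then d i else undefined), precomp X s (Suc (qdim X)))"

lemma elem_equiv_iff:
  "elem_equiv C m m' \<longleftrightarrow> (\<exists>X s d d'. is_simplex C X \<and> codegeneracy (qdim X) s \<and>
     section_of (qdim X) s d \<and> section_of (qdim X) s d' \<and>
     m = section_dmor X s d \<and> m' = section_dmor X s d')"
  unfolding elem_equiv_def codegeneracy_def section_of_def section_dmor_def
  by (simp only: imp_conjR all_conj_distrib) (rule iffI; elim exE conjE; intro exI conjI; assumption)

lemma codegeneracy_last:
  assumes "codegeneracy q s"
  shows "s (Suc q) = q"
proof -
  have bounded: "\<forall>i \<le> Suc q. s i \<le> q" and mono: "\<forall>i j. i \<le> j \<and> j \<le> Suc q \<longrightarrow> s i \<le> s j"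
    and onto: "\<forall>k \<le> q. \<exists>i \<le> Suc q. s i = k"
    using assms unfolding codegeneracy_def by blast+
  obtain i where "i \<le> Suc q" "s i = q" using onto by blast
  then have "q \<le> s (Suc q)" using mono by auto
  with bounded show ?thesis by (simp add: le_antisym)
qed

lemma is_dmor_section_dmor:
  assumes X: "is_simplex C X" and s: "codegeneracy (qdim X) s" and d: "section_of (qdim X) s d"
  shows "is_dmor C (section_dmor X s d)"
proof -
  let ?Z = "precomp X s (Suc (qdim X))" and ?d = "\<lambda>i. if i \<le> qdim X then d i else undefined"
  have "(\<lambda>i. if i \<le> qdim X then sob ?Z (?d i) else undefined) = sob X"
    using is_simplexD(7)[OF X] d by (auto intro!: ext simp: sob_precomp section_of_def)
  moreover have "(\<lambda>i j. if i \<le> j \<and> j \<le> qdim X then sar ?Z (?d i) (?d j) else undefined) = sar X"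
    using is_simplexD(8)[OF X] d by (auto intro!: ext simp: sar_precomp section_of_def)
  ultimately have "precomp ?Z ?d (qdim X) = (qdim X, sob X, sar X)"
    by (simp add: precomp_def[of _ _ "qdim X"])
  also have "\<dots> = X" by (simp add: qdim_def sob_def sar_def)
  finally show ?thesis
    using X is_simplex_precomp[OF X] s d
    unfolding is_dmor_def section_dmor_def codegeneracy_def section_of_def by auto
qed

lemma sup_mor_section_dmor:
  assumes X: "is_simplex C X" and s: "codegeneracy (qdim X) s" and d: "section_of (qdim X) s d"
  shows "sup_mor (section_dmor X s d) = Idt C (sup_ob X)"
proof -
  have "sup_mor (section_dmor X s d) = sar (precomp X s (Suc (qdim X))) (d (qdim X)) (Suc (qdim X))"
    by (simp add: sup_mor_def section_dmor_def)
  also have "\<dots> = sar X (s (d (qdim X))) (s (Suc (qdim X)))"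
    using d by (simp add: sar_precomp section_of_def)
  also have "\<dots> = Idt C (sup_ob X)"
    using codegeneracy_last[OF s] d is_simplexD(5)[OF X] by (simp add: section_of_def sup_ob_def)
  finally show ?thesis .
qed

lemma qdim_r_obj [simp]: "qdim (r_obj C T X f) = Suc (qdim X)"
  by (simp add: r_obj_def qdim_def)

lemma sob_r_obj:
  "sob (r_obj C T X f) i = (if i \<le> qdim X then sob X i else if i = Suc (qdim X) then T else undefined)"
  by (simp add: r_obj_def sob_def)

lemma sar_r_obj:
  "sar (r_obj C T X f) i j = (if i \<le> j \<and> j \<le> qdim X then sar X i j
     else if i \<le> qdim X \<and> j = Suc (qdim X) then Cmp C f (sar X i (qdim X))
     else if i = Suc (qdim X) \<and> j = Suc (qdim X) then Idt C T else undefined)"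
  by (simp add: r_obj_def sar_def)

lemma codegeneracy_r_map:
  assumes "codegeneracy q s"
  shows "codegeneracy (Suc q) (r_map (Suc q) q s)"
  unfolding codegeneracy_def
proof (intro conjI allI impI)
  fix k assume k: "k \<le> Suc q"
  show "\<exists>i \<le> Suc (Suc q). r_map (Suc q) q s i = k"
  proof (cases "k \<le> q")
    case True
    then obtain i where "i \<le> Suc q" "s i = k" using assms by (auto simp: codegeneracy_def)
    then show ?thesis by (intro exI[of _ i]) (auto simp: r_map_def)
  next
    case False
    then show ?thesis using k by (intro exI[of _ "Suc (Suc q)"]) (auto simp: r_map_def)
  qed
qed (use assms in \<open>auto simp: codegeneracy_def r_map_def le_Suc_eq\<close>)

lemma section_of_r_map:
  "section_of q s d \<Longrightarrow> section_of (Suc q) (r_map (Suc q) q s) (r_map q (Suc q) d)"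
  by (auto simp: section_of_def r_map_def le_Suc_eq)

locale small_category =
  fixes C :: "('o, 'm) category"
  assumes is_category: "is_category C"
begin

lemma Idt_in_Mor: "a \<in> Obj C \<Longrightarrow> Idt C a \<in> Mor C"
  and Dom_Idt: "a \<in> Obj C \<Longrightarrow> Dom C (Idt C a) = a"
  and Cod_Idt: "a \<in> Obj C \<Longrightarrow> Cod C (Idt C a) = a"
  using is_category by (auto simp: is_category_def)

lemma Cmp_in_Mor: "f \<in> Mor C \<Longrightarrow> g \<in> Mor C \<Longrightarrow> Cod C f = Dom C g \<Longrightarrow> Cmp C g f \<in> Mor C"
  and Dom_Cmp: "f \<in> Mor C \<Longrightarrow> g \<in> Mor C \<Longrightarrow> Cod C f = Dom C g \<Longrightarrow> Dom C (Cmp C g f) = Dom C f"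
  and Cod_Cmp: "f \<in> Mor C \<Longrightarrow> g \<in> Mor C \<Longrightarrow> Cod C f = Dom C g \<Longrightarrow> Cod C (Cmp C g f) = Cod C g"
  using is_category by (auto simp: is_category_def)

lemma Cmp_Idt_left: "f \<in> Mor C \<Longrightarrow> Cod C f = a \<Longrightarrow> Cmp C (Idt C a) f = f"
  and Cmp_Idt_right: "f \<in> Mor C \<Longrightarrow> Dom C f = a \<Longrightarrow> Cmp C f (Idt C a) = f"
  using is_category by (auto simp: is_category_def)

lemma Cmp_assoc:
  "f \<in> Mor C \<Longrightarrow> g \<in> Mor C \<Longrightarrow> h \<in> Mor C \<Longrightarrow> Cod C f = Dom C g \<Longrightarrow> Cod C g = Dom C h \<Longrightarrow>
     Cmp C h (Cmp C g f) = Cmp C (Cmp C h g) f"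
  using is_category unfolding is_category_def by blast

lemma sup_mor_dcomp:
  assumes m: "is_dmor C (X, \<xi>, Y)" and n: "is_dmor C (Y, \<eta>, Z)"
  shows "sup_mor (dcomp (Y, \<eta>, Z) (X, \<xi>, Y)) = Cmp C (sup_mor (Y, \<eta>, Z)) (sup_mor (X, \<xi>, Y))"
proof -
  note a = is_dmorD[OF m] and b = is_dmorD[OF n]
  have top: "\<xi> (qdim X) \<le> qdim Y" using a(3) by simp
  then have "\<eta> (\<xi> (qdim X)) \<le> \<eta> (qdim Y)" "\<eta> (qdim Y) \<le> qdim Z" using b(3,4) by auto
  then show ?thesis
    using sar_precomp[OF top order_refl, of Z \<eta>] b(6) is_simplexD(6)[OF b(2)]
    by (simp add: sup_mor_def dcomp_def)
qed

text \<open>Besides the endpoints, \<sim> preserves sup: this is what lets the parameter g of R g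
  pass through the induction on \<sim>.\<close>

lemma dequivD:
  assumes "dequiv C m m'"
  shows "is_dmor C m \<and> is_dmor C m' \<and> fst m = fst m' \<and> snd (snd m) = snd (snd m') \<and>
    sup_mor m = sup_mor m'"
  using assms
proof induction
  case (elem m m')
  then show ?case
    using is_dmor_section_dmor sup_mor_section_dmor
    by (fastforce simp: elem_equiv_iff section_dmor_def)
next
  case (comp_left m m' n)
  obtain X \<xi> Y \<xi>' \<eta> Z where eqs: "m = (X, \<xi>, Y)" "m' = (X, \<xi>', Y)" "n = (Y, \<eta>, Z)"
    using comp_left by (cases m, cases m', cases n) auto
  have "is_dmor C (dcomp n m)" "is_dmor C (dcomp n m')" "sup_mor (dcomp n m) = sup_mor (dcomp n m')"
    using comp_left by (simp_all add: eqs is_dmor_dcomp sup_mor_dcomp)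
  then show ?case by (simp add: eqs dcomp_def)
next
  case (comp_right m m' k)
  obtain X \<xi> Y \<xi>' W \<eta> where eqs: "m = (X, \<xi>, Y)" "m' = (X, \<xi>', Y)" "k = (W, \<eta>, X)"
    using comp_right by (cases m, cases m', cases k) auto
  have "is_dmor C (dcomp m k)" "is_dmor C (dcomp m' k)" "sup_mor (dcomp m k) = sup_mor (dcomp m' k)"
    using comp_right by (simp_all add: eqs is_dmor_dcomp sup_mor_dcomp)
  then show ?case by (simp add: eqs dcomp_def)
qed simp_all

lemma dequiv_cases:
  assumes "dequiv C m m'"
  obtains X \<xi> \<xi>' Y where "m = (X, \<xi>, Y)" "m' = (X, \<xi>', Y)"
    "is_dmor C (X, \<xi>, Y)" "is_dmor C (X, \<xi>', Y)" "sup_mor (X, \<xi>, Y) = sup_mor (X, \<xi>', Y)"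
proof -
  obtain X \<xi> Y X' \<xi>' Y' where eqs: "m = (X, \<xi>, Y)" "m' = (X', \<xi>', Y')"
    using prod_cases3 by metis
  with dequivD[OF assms] have "X' = X" "Y' = Y" by simp_all
  with dequivD[OF assms] show thesis
    by (intro that[of X \<xi> Y \<xi>']) (simp_all add: eqs)
qed

end

locale left_fiber = small_category C for C :: "('o, 'm) category" +
  fixes T :: 'o
  assumes T_in_Obj: "T \<in> Obj C"
begin

lemma is_simplex_r_obj:
  assumes X: "is_simplex C X" and f: "f \<in> Mor C" "Dom C f = sup_ob X" "Cod C f = T"
  shows "is_simplex C (r_obj C T X f)"
proof -
  note x = is_simplexD[OF X]
  let ?q = "qdim X" and ?R = "r_obj C T X f"
  have to_top: "sar X i ?q \<in> Mor C" "Cod C (sar X i ?q) = Dom C f" "Dom C (sar X i ?q) = sob X i"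
    if "i \<le> ?q" for i
    using x(2-4) f that by (auto simp: sup_ob_def)
  have ob: "\<forall>i \<le> Suc ?q. sob ?R i \<in> Obj C"
    using x(1) T_in_Obj by (auto simp: sob_r_obj le_Suc_eq)
  have ar: "sar ?R i j \<in> Mor C \<and> Dom C (sar ?R i j) = sob ?R i \<and> Cod C (sar ?R i j) = sob ?R j"
    if "i \<le> j" "j \<le> Suc ?q" for i j
    using that x(2-4) to_top[of i] f Cmp_in_Mor Dom_Cmp Cod_Cmp Idt_in_Mor[OF T_in_Obj]
      Dom_Idt[OF T_in_Obj] Cod_Idt[OF T_in_Obj]
    by (cases "j \<le> ?q"; cases "i \<le> ?q") (auto simp: sob_r_obj sar_r_obj le_Suc_eq)
  have idt: "\<forall>i \<le> Suc ?q. sar ?R i i = Idt C (sob ?R i)"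
    using x(5) by (auto simp: sob_r_obj sar_r_obj le_Suc_eq)
  have cmp: "Cmp C (sar ?R j k) (sar ?R i j) = sar ?R i k" if ijk: "i \<le> j" "j \<le> k" "k \<le> Suc ?q" for i j k
  proof (cases "k \<le> ?q")
    case True
    then show ?thesis using ijk x(6) by (auto simp: sar_r_obj)
  next
    case k_top: False
    show ?thesis
    proof (cases "j \<le> ?q")
      case True
      have "Cmp C (Cmp C f (sar X j ?q)) (sar X i j) = Cmp C f (Cmp C (sar X j ?q) (sar X i j))"
        using ijk True to_top[of j] x(2,4) f by (intro Cmp_assoc[symmetric]) auto
      also have "\<dots> = Cmp C f (sar X i ?q)" using ijk True x(6) by auto
      finally show ?thesis using k_top True ijk by (auto simp: sar_r_obj le_Suc_eq)
    next
      case False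
      then show ?thesis
        using ijk k_top to_top[of i] f Cmp_in_Mor Cod_Cmp Cmp_Idt_left Idt_in_Mor[OF T_in_Obj]
          Cod_Idt[OF T_in_Obj]
        by (cases "i \<le> ?q") (auto simp: sar_r_obj le_Suc_eq)
    qed
  qed
  show ?thesis
    unfolding is_simplex_def qdim_r_obj using ob ar idt cmp by (auto simp: sob_r_obj sar_r_obj)
qed

text \<open>The map R g of the header; on a fiber morphism (X, f) \<rightarrow> (Y, g) it is r, because
  f = g \<circ> sup xi there.\<close>

definition r_dmor :: "'m \<Rightarrow> ('o, 'm) dmor \<Rightarrow> ('o, 'm) dmor" where
  "r_dmor g m = (case m of (X, \<xi>, Y) \<Rightarrow> r_mor C T X (Cmp C g (sup_mor m)) \<xi> Y g)"

lemma is_dmor_r_dmor: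
  assumes m: "is_dmor C (X, \<xi>, Y)" and g: "g \<in> Mor C" "Dom C g = sup_ob Y" "Cod C g = T"
  shows "is_dmor C (r_dmor g (X, \<xi>, Y))"
proof -
  note a = is_dmorD[OF m] and y = is_simplexD[OF a(2)]
  define f where "f = Cmp C g (sup_mor (X, \<xi>, Y))"
  let ?p = "qdim X" and ?q = "qdim Y"
  have f: "f \<in> Mor C" "Dom C f = sup_ob X" "Cod C f = T"
    using Cmp_in_Mor Dom_Cmp Cod_Cmp sup_mor_in_Mor[OF m] g unfolding f_def by auto
  have f_factors: "Cmp C g (sar Y (\<xi> i) ?q) = Cmp C f (sar X i ?p)" if i: "i \<le> ?p" for i
  proof -
    have \<xi>i: "\<xi> i \<le> \<xi> ?p" "\<xi> ?p \<le> ?q" using a(3,4) i by auto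
    have "Cmp C f (sar X i ?p) = Cmp C (Cmp C g (sar Y (\<xi> ?p) ?q)) (sar Y (\<xi> i) (\<xi> ?p))"
      unfolding f_def using a(6) sar_precomp[OF i order_refl, of Y \<xi>] by (simp add: sup_mor_def)
    also have "\<dots> = Cmp C g (Cmp C (sar Y (\<xi> ?p) ?q) (sar Y (\<xi> i) (\<xi> ?p)))"
      using \<xi>i y(2-4) g by (intro Cmp_assoc[symmetric]) (auto simp: sup_ob_def)
    also have "\<dots> = Cmp C g (sar Y (\<xi> i) ?q)" using \<xi>i y(6) by simp
    finally show ?thesis by simp
  qed
  have "precomp (r_obj C T Y g) (r_map ?p ?q \<xi>) (Suc ?p) = r_obj C T X f"
    unfolding precomp_def r_obj_def[of C T X f]
    using a(3,4,6) sob_precomp[of _ ?p Y \<xi>] sar_precomp[of _ _ ?p Y \<xi>] f_factors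
    by (auto intro!: ext simp: sob_r_obj sar_r_obj r_map_def)
  moreover have "is_simplex C (r_obj C T X f)" "is_simplex C (r_obj C T Y g)"
    using is_simplex_r_obj a(1,2) f g by auto
  ultimately show ?thesis
    using a(3,4) unfolding r_dmor_def r_mor_def is_dmor_def f_def[symmetric]
    by (auto simp: r_map_def le_Suc_eq)
qed

lemma r_dmor_dcomp:
  assumes m: "is_dmor C (X, \<xi>, Y)" and n: "is_dmor C (Y, \<eta>, Z)"
    and g: "g \<in> Mor C" "Dom C g = sup_ob Z"
  shows "r_dmor g (dcomp (Y, \<eta>, Z) (X, \<xi>, Y)) =
    dcomp (r_dmor g (Y, \<eta>, Z)) (r_dmor (Cmp C g (sup_mor (Y, \<eta>, Z))) (X, \<xi>, Y))"
proof -
  have sup_comp: "Cmp C g (sup_mor (dcomp (Y, \<eta>, Z) (X, \<xi>, Y))) =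
      Cmp C (Cmp C g (sup_mor (Y, \<eta>, Z))) (sup_mor (X, \<xi>, Y))"
    unfolding sup_mor_dcomp[OF m n]
    using sup_mor_in_Mor[OF m] sup_mor_in_Mor[OF n] g by (intro Cmp_assoc) auto
  have r_map_comp: "(\<lambda>i. if i \<le> Suc (qdim X) then r_map (qdim Y) (qdim Z) \<eta> (r_map (qdim X) (qdim Y) \<xi> i)
      else undefined) = r_map (qdim X) (qdim Z) (\<lambda>i. if i \<le> qdim X then \<eta> (\<xi> i) else undefined)"
    using is_dmorD(3)[OF m] by (auto intro!: ext simp: r_map_def)
  show ?thesis
    by (simp add: r_dmor_def r_mor_def sup_comp) (simp add: dcomp_def r_map_comp)
qed

lemma r_dmor_section_dmor:
  assumes X: "is_simplex C X" and s: "codegeneracy (qdim X) s" and d: "section_of (qdim X) s d"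
    and g: "g \<in> Mor C" "Dom C g = sup_ob X"
  shows "r_dmor g (section_dmor X s d) =
    section_dmor (r_obj C T X g) (r_map (Suc (qdim X)) (qdim X) s) (r_map (qdim X) (Suc (qdim X)) d)"
proof -
  let ?q = "qdim X" and ?Z = "precomp X s (Suc (qdim X))"
  have "Cmp C g (sup_mor (section_dmor X s d)) = g"
    using sup_mor_section_dmor[OF X s d] Cmp_Idt_right g by simp
  moreover have "r_obj C T ?Z g = precomp (r_obj C T X g) (r_map (Suc ?q) ?q s) (Suc (Suc ?q))"
  proof -
    have "sob ?Z i = (if i \<le> Suc ?q then sob X (s i) else undefined)" for i
      by (simp add: precomp_def sob_def)
    moreover have "sar ?Z i j = (if i \<le> j \<and> j \<le> Suc ?q then sar X (s i) (s j) else undefined)" for i j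
      by (simp add: precomp_def sar_def)
    ultimately show ?thesis
      unfolding precomp_def[of "r_obj C T X g"] r_obj_def[of C T ?Z g] qdim_precomp
      using s codegeneracy_last[OF s] unfolding codegeneracy_def
      by (auto intro!: ext simp: sob_r_obj sar_r_obj r_map_def)
  qed
  ultimately show ?thesis
    unfolding r_dmor_def r_mor_def section_dmor_def by (auto intro!: ext simp: r_map_def)
qed

lemma elem_equiv_r_dmor:
  assumes e: "elem_equiv C m m'"
    and g: "g \<in> Mor C" "Dom C g = sup_ob (snd (snd m))" "Cod C g = T"
  shows "elem_equiv C (r_dmor g m) (r_dmor g m')"
proof -
  obtain X s d d' where X: "is_simplex C X" and s: "codegeneracy (qdim X) s"
    and d: "section_of (qdim X) s d" "section_of (qdim X) s d'"
    and m: "m = section_dmor X s d" "m' = section_dmor X s d'"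
    using e unfolding elem_equiv_iff by blast
  have gX: "Dom C g = sup_ob X"
    using g(2) codegeneracy_last[OF s] sob_precomp[of "Suc (qdim X)" "Suc (qdim X)" X s]
    by (simp add: m section_dmor_def sup_ob_def)
  show ?thesis
    unfolding elem_equiv_iff m r_dmor_section_dmor[OF X s d(1) g(1) gX]
      r_dmor_section_dmor[OF X s d(2) g(1) gX]
    using is_simplex_r_obj[OF X g(1) gX g(3)] codegeneracy_r_map[OF s] section_of_r_map[OF d(1)]
      section_of_r_map[OF d(2)]
    by (metis qdim_r_obj)
qed

lemma dequiv_r_dmor:
  assumes "dequiv C m m'" and "g \<in> Mor C" "Dom C g = sup_ob (snd (snd m))" "Cod C g = T"
  shows "dequiv C (r_dmor g m) (r_dmor g m')"
  using assms
proof (induction arbitrary: g)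
  case (elem m m')
  then show ?case by (intro dequiv.elem elem_equiv_r_dmor)
next
  case (refl m)
  obtain X \<xi> Y where "m = (X, \<xi>, Y)" using prod_cases3 by blast
  then show ?case using refl is_dmor_r_dmor[of X \<xi> Y g] by (simp add: dequiv.refl)
next
  case (sym m m')
  have "snd (snd m) = snd (snd m')" using dequivD[OF sym.hyps] by simp
  then show ?case using sym.IH sym.prems by (simp add: dequiv.sym)
next
  case (trans m m' m'')
  have "snd (snd m) = snd (snd m')" using dequivD[OF trans.hyps(1)] by simp
  then show ?case
    using trans.IH trans.prems by (metis dequiv.trans)
next
  case (comp_left m m' n)
  obtain X \<xi> \<xi>' Y where eqs: "m = (X, \<xi>, Y)" "m' = (X, \<xi>', Y)"
    and dmors: "is_dmor C (X, \<xi>, Y)" "is_dmor C (X, \<xi>', Y)"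
    using dequiv_cases[OF comp_left.hyps(1)] by metis
  obtain \<eta> Z where n: "n = (Y, \<eta>, Z)"
    using comp_left.hyps(3) eqs by (metis fst_conv snd_conv prod_cases3)
  have dmor_n: "is_dmor C (Y, \<eta>, Z)" using comp_left.hyps(2) n by simp
  have g: "g \<in> Mor C" "Dom C g = sup_ob Z" "Cod C g = T"
    using comp_left.prems by (simp_all add: eqs n dcomp_def)
  let ?g = "Cmp C g (sup_mor (Y, \<eta>, Z))"
  have "dequiv C (r_dmor ?g m) (r_dmor ?g m')"
    using comp_left.IH g sup_mor_in_Mor[OF dmor_n] Cmp_in_Mor Dom_Cmp Cod_Cmp by (simp add: eqs)
  then have "dequiv C (dcomp (r_dmor g n) (r_dmor ?g m)) (dcomp (r_dmor g n) (r_dmor ?g m'))"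
    using is_dmor_r_dmor[OF dmor_n g, folded n]
    by (rule dequiv.comp_left) (simp add: eqs n r_dmor_def r_mor_def)
  then show ?case
    unfolding eqs n r_dmor_dcomp[OF dmors(1) dmor_n g(1,2)] r_dmor_dcomp[OF dmors(2) dmor_n g(1,2)] .
next
  case (comp_right m m' k)
  obtain Y \<xi> \<xi>' Z where eqs: "m = (Y, \<xi>, Z)" "m' = (Y, \<xi>', Z)"
    and dmors: "is_dmor C (Y, \<xi>, Z)" "is_dmor C (Y, \<xi>', Z)"
    and same_sup: "sup_mor (Y, \<xi>, Z) = sup_mor (Y, \<xi>', Z)"
    using dequiv_cases[OF comp_right.hyps(1)] by metis
  obtain X \<eta> where k: "k = (X, \<eta>, Y)"
    using comp_right.hyps(3) eqs by (metis fst_conv snd_conv prod_cases3)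
  have dmor_k: "is_dmor C (X, \<eta>, Y)" using comp_right.hyps(2) k by simp
  have g: "g \<in> Mor C" "Dom C g = sup_ob Z" "Cod C g = T"
    using comp_right.prems by (simp_all add: eqs k dcomp_def)
  let ?g = "Cmp C g (sup_mor (Y, \<xi>, Z))"
  have g': "?g \<in> Mor C" "Dom C ?g = sup_ob Y" "Cod C ?g = T"
    using g sup_mor_in_Mor[OF dmors(1)] Cmp_in_Mor Dom_Cmp Cod_Cmp by simp_all
  have "dequiv C (r_dmor g m) (r_dmor g m')"
    using comp_right.IH g by (simp add: eqs)
  then have "dequiv C (dcomp (r_dmor g m) (r_dmor ?g k)) (dcomp (r_dmor g m') (r_dmor ?g k))"
    using is_dmor_r_dmor[OF dmor_k g', folded k]
    by (rule dequiv.comp_right) (simp add: eqs k r_dmor_def r_mor_def)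
  then show ?case
    unfolding eqs k r_dmor_dcomp[OF dmor_k dmors(1) g(1,2)] r_dmor_dcomp[OF dmor_k dmors(2) g(1,2)]
      same_sup .
qed

end

theorem lemma30:
  fixes C :: "('o, 'm) category" and T :: 'o
    and X Y :: "('o, 'm) simplex" and f g :: 'm and \<xi> \<xi>' :: "nat \<Rightarrow> nat"
  assumes "is_category C"
    and "T \<in> Obj C"
    and "fiber_mor C T X f \<xi> Y g"
    and "fiber_mor C T X f \<xi>' Y g"
    and "dequiv C (X, \<xi>, Y) (X, \<xi>', Y)"
  shows "dequiv C (r_mor C T X f \<xi> Y g) (r_mor C T X f \<xi>' Y g)"
proof -
  interpret left_fiber C T
    using assms(1,2) by unfold_locales
  have "dequiv C (r_dmor g (X, \<xi>, Y)) (r_dmor g (X, \<xi>', Y))"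
    using dequiv_r_dmor[OF assms(5)] assms(3) by (auto simp: fiber_mor_def fiber_obj_def)
  moreover have "r_dmor g (X, \<xi>, Y) = r_mor C T X f \<xi> Y g" "r_dmor g (X, \<xi>', Y) = r_mor C T X f \<xi>' Y g"
    using assms(3,4) by (auto simp: r_dmor_def fiber_mor_def)
  ultimately show ?thesis by simp
qed

end
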